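(* Let $n,\ell\in\mathbb Z$ with $n>2\ell\ge6$, let $q$ be a primitive $2\ell$-th root of unity in a field $k$, and let $w_1,w_2$ be non-integral. Then for every half-diagram $D$ in the standard basis of $\mathcal S_n(-n+2\ell)$ the hook product $h_3(D)$ is defined (its reduced expression specialises without a vanishing denominator), and $h_3(D)\neq0$ for some such $D$.
   Context: Setting: symplectic blob algebra $b_n^x(-[2],-[w_1],-[w_2],[w_1+1],[w_2+1],\kappa_{LR})$ (generators $e,e_1,\dots,e_{n-1},f$; basis of Temperley–Lieb diagrams whose lines may carry a left blob if deformable to the left edge without crossing lines and a right blob if deformable to the right edge). Quantum numbers: $[x]=\frac{q^x-q^{-x}}{q-q^{-1}}$; $w_i$ are formal, with $Q_i=q^{w_i}$ and $[w_i+x]=\frac{Q_iq^x-Q_i^{-1}q^{-x}}{q-q^{-1}}$; "$w_i$ non-integral" means $Q_i\notin\pm q^{\mathbb Z}$. Falling factorials $[w]_\ell!=[w][w-1]\cdots[w-\ell+1]$, $[\ell]!=[1][2]\cdots[\ell]$. The cell module $\mathcal S_n(-n+2\ell)$ has basis the half-diagrams $D$: $n$ vertices on a top edge, $\ell$ non-crossing arcs joining pairs of top vertices and $n-2\ell$ undecorated non-crossing propagating lines running to the bottom; an arc may carry a left blob if it can be deformed to touch the left edge without crossing lines, or a right blob if it can be deformed to the right edge. Number top vertices $1,\dots,n$ left to right and the bottom ends of propagating lines $n+1,\dots,2n-2\ell$ from right to left; each line $g$ is then $(a,a+2b+1)$ with $b\ge0$. Define $h_3(g)=[b+1]$ if $g$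 is an undecorated arc; $1$ if $g$ is propagating and $a\equiv1,\dots,2\ell \pmod{4\ell}$; $-1$ if $g$ is propagating and $a\equiv 2\ell+1,\dots,4\ell\pmod{4\ell}$; $\left[\frac{a+2b+1}{2}\right]\left[\frac{2w_1-a+1}{2}\right]$ if $g$ has a left blob; $\left[\frac{n-a+1}{2}\right]\left[\frac{2w_2-n+a+2b+1}{2}\right]$ if $g$ has a right blob. Set $h_3(D)=[\ell]!\,[w_1]_\ell!\,[w_2]_\ell!\big/\prod_{g\in D}h_3(g)$, computed as a rational function in indeterminates $q,Q_1,Q_2$ with all cancellations performed before specialising $q$ (and $Q_1,Q_2$). *)

theory Defs
  imports Main "HOL-Computational_Algebra.Computational_Algebra"
begin

text \<open>Polynomials in three indeterminates over k are modelled as nested univariate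
polynomials: the innermost variable is q, the middle one Q1, the outermost one Q2.\<close>

type_synonym 'k rpoly = "'k poly poly poly"
type_synonym 'k rfun = "'k rpoly fract"

definition var_q :: "'k::field_gcd rfun" where
  "var_q = to_fract [:[:[:0, 1:]:]:]"

definition var_Q1 :: "'k::field_gcd rfun" where
  "var_Q1 = to_fract [:[:0, 1:]:]"

definition var_Q2 :: "'k::field_gcd rfun" where
  "var_Q2 = to_fract [:0, 1:]"

definition qnum :: "int \<Rightarrow> 'k::field_gcd rfun" where
  "qnum x = (var_q powi x - var_q powi (-x)) / (var_q - inverse var_q)"

text \<open>[w_i + x] for integer x, with Q_i = q^{w_i}; Q is var_Q1 or var_Q2.\<close>
definition qnumw :: "'k::field_gcd rfun \<Rightarrow> int \<Rightarrow> 'k rfun" where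
  "qnumw Q x = (Q * var_q powi x - inverse Q * var_q powi (-x)) / (var_q - inverse var_q)"

definition qfact :: "nat \<Rightarrow> 'k::field_gcd rfun" where
  "qfact l = (\<Prod>t\<in>{1..l}. qnum (int t))"

definition qfallfact :: "'k::field_gcd rfun \<Rightarrow> nat \<Rightarrow> 'k rfun" where
  "qfallfact Q l = (\<Prod>t\<in>{0..<l}. qnumw Q (- int t))"

definition eval3 :: "'k::field_gcd \<Rightarrow> 'k \<Rightarrow> 'k \<Rightarrow> 'k rpoly \<Rightarrow> 'k" where
  "eval3 q0 Q10 Q20 P = poly (poly (poly P [:[:Q20:]:]) [:Q10:]) q0"

definition defined_at :: "'k::field_gcd \<Rightarrow> 'k \<Rightarrow> 'k \<Rightarrow> 'k rfun \<Rightarrow> bool" where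
  "defined_at q0 Q10 Q20 h \<longleftrightarrow> eval3 q0 Q10 Q20 (snd (quot_of_fract h)) \<noteq> 0"

definition value_at :: "'k::field_gcd \<Rightarrow> 'k \<Rightarrow> 'k \<Rightarrow> 'k rfun \<Rightarrow> 'k" where
  "value_at q0 Q10 Q20 h =
     eval3 q0 Q10 Q20 (fst (quot_of_fract h)) / eval3 q0 Q10 Q20 (snd (quot_of_fract h))"

datatype blob = Undec | LBlob | RBlob

text \<open>A half-diagram is given by its set of arcs (pairs (i,j), 1 \<le> i < j \<le> n, of top
vertices) together with a decoration of each arc.  The remaining top vertices are the
feet of the undecorated, non-crossing propagating lines, which are thereby determined.\<close>
type_synonym halfdiag = "(nat \<times> nat) set \<times> (nat \<times> nat \<Rightarrow> blob)"

definition endpoints :: "(nat \<times> nat) set \<Rightarrow> nat set" where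
  "endpoints A = fst ` A \<union> snd ` A"

definition free_vertices :: "nat \<Rightarrow> (nat \<times> nat) set \<Rightarrow> nat set" where
  "free_vertices n A = {1..n} - endpoints A"

text \<open>An arc can be deformed to touch the left (right) edge without crossing lines iff
it is not nested inside another arc and no propagating line lies to its left (right).\<close>
definition left_exposed :: "nat \<Rightarrow> (nat \<times> nat) set \<Rightarrow> nat \<times> nat \<Rightarrow> bool" where
  "left_exposed n A g \<longleftrightarrow>
     (\<forall>(i', j')\<in>A. \<not> (i' < fst g \<and> snd g < j')) \<and>
     (\<forall>v\<in>free_vertices n A. \<not> v < fst g)"

definition right_exposed :: "nat \<Rightarrow> (nat \<times> nat) set \<Rightarrow> nat \<times> nat \<Rightarrow> bool" where
  "right_exposed n A g \<longleftrightarrow>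
     (\<forall>(i', j')\<in>A. \<not> (i' < fst g \<and> snd g < j')) \<and>
     (\<forall>v\<in>free_vertices n A. \<not> snd g < v)"

definition is_halfdiag :: "nat \<Rightarrow> nat \<Rightarrow> halfdiag \<Rightarrow> bool" where
  "is_halfdiag n l D \<longleftrightarrow>
     (let A = fst D; dec = snd D in
       card A = l \<and>
       (\<forall>(i, j)\<in>A. 1 \<le> i \<and> i < j \<and> j \<le> n) \<and>
       (\<forall>g\<in>A. \<forall>g'\<in>A. g \<noteq> g' \<longrightarrow>
          {fst g, snd g} \<inter> {fst g', snd g'} = {}) \<and>
       (\<forall>(i, j)\<in>A. \<forall>(i', j')\<in>A. \<not> (i < i' \<and> i' < j \<and> j < j')) \<and>
       (\<forall>(i, j)\<in>A. \<forall>v\<in>free_vertices n A. \<not> (i < v \<and> v < j)) \<and>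
       (\<forall>g\<in>A. dec g = LBlob \<longrightarrow> left_exposed n A g) \<and>
       (\<forall>g\<in>A. dec g = RBlob \<longrightarrow> right_exposed n A g) \<and>
       (\<forall>g. g \<notin> A \<longrightarrow> dec g = Undec))"

definition halfdiags :: "nat \<Rightarrow> nat \<Rightarrow> halfdiag set" where
  "halfdiags n l = {D. is_halfdiag n l D}"

text \<open>Bottom end of the propagating line with top vertex a: bottom ends are numbered
n+1, ..., 2n-2l from right to left.\<close>
definition bottom_end :: "nat \<Rightarrow> (nat \<times> nat) set \<Rightarrow> nat \<Rightarrow> nat" where
  "bottom_end n A a = n + card {v \<in> free_vertices n A. a \<le> v}"

definition h3_prop :: "nat \<Rightarrow> nat \<Rightarrow> 'k::field_gcd rfun" where
  "h3_prop l a = (if a mod (4 * l) \<in> {1..2 * l} then 1 else -1)"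

text \<open>h_3 of an arc g = (a, j) with j = a+2b+1.  For arcs in a half-diagram the arguments
(a+2b+1)/2, (1-a)/2, (n-a+1)/2 and (-n+a+2b+1)/2 are integers; they are computed exactly
with integer division.\<close>
definition h3_arc :: "nat \<Rightarrow> blob \<Rightarrow> nat \<times> nat \<Rightarrow> 'k::field_gcd rfun" where
  "h3_arc n d g = (let a = int (fst g); j = int (snd g); b = (j - a - 1) div 2 in
     (case d of
        Undec \<Rightarrow> qnum (b + 1)
      | LBlob \<Rightarrow> qnum (j div 2) * qnumw var_Q1 ((1 - a) div 2)
      | RBlob \<Rightarrow> qnum ((int n - a + 1) div 2) * qnumw var_Q2 ((j - int n) div 2)))"

definition h3 :: "nat \<Rightarrow> nat \<Rightarrow> halfdiag \<Rightarrow> 'k::field_gcd rfun" where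
  "h3 n l D =
     (qfact l * qfallfact var_Q1 l * qfallfact var_Q2 l) /
     ((\<Prod>g\<in>fst D. h3_arc n (snd D g) g) *
      (\<Prod>a\<in>free_vertices n (fst D). h3_prop l a))"

end

theory Submission
  imports Defs
begin

text \<open>At a primitive 2l-th root of unity the quantum number [x] vanishes only for x divisible
  by l, while [w_i + x] never vanishes for non-integral w_i. Every arc of a half-diagram
  contributes a factor [x] with x half the number of vertices it covers (extended to the
  left or right edge if it carries a blob), so 1 \<le> x \<le> l; an arc with x = l covers all
  2l arc endpoints, and since n > 2l there is at most one such arc. Its factor [l] cancels the
  only vanishing factor [l] of [l]!, so in every case h_3(D) is a quotient whose denominator
  does not vanish at the point, and its value is nonzero for the diagram of l adjacent arcs
  whose last arc carries a left blob.\<close>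

section \<open>Rational functions defined at a point\<close>

lemma eval3_mult [simp]: "eval3 q0 Q1 Q2 (P * R) = eval3 q0 Q1 Q2 P * eval3 q0 Q1 Q2 R"
  and eval3_add [simp]: "eval3 q0 Q1 Q2 (P + R) = eval3 q0 Q1 Q2 P + eval3 q0 Q1 Q2 R"
  and eval3_uminus [simp]: "eval3 q0 Q1 Q2 (- P) = - eval3 q0 Q1 Q2 P"
  and eval3_1 [simp]: "eval3 q0 Q1 Q2 1 = 1"
  and eval3_0 [simp]: "eval3 q0 Q1 Q2 0 = 0"
  by (simp_all add: eval3_def)

text \<open>Any representation P / R of h whose denominator does not vanish at the point computes
  the value of h: the reduced denominator divides R.\<close>
lemma defined_at_fraction:
  assumes h: "h = to_fract P / to_fract R" and R: "eval3 q0 Q1 Q2 R \<noteq> 0"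
  shows "defined_at q0 Q1 Q2 h"
    and "value_at q0 Q1 Q2 h = eval3 q0 Q1 Q2 P / eval3 q0 Q1 Q2 R"
proof -
  obtain P' R' where PR': "quot_of_fract h = (P', R')" by (cases "quot_of_fract h")
  have "R \<noteq> 0" "R' \<noteq> 0" using R snd_quot_of_fract_nonzero[of h] PR' by auto
  moreover have "Fract P' R' = Fract P R"
    using PR' h quot_to_fract_quot_of_fract[of h] by (simp add: quot_to_fract_def Fract_conv_to_fract)
  ultimately have cross: "P' * R = P * R'" by (simp add: eq_fract)
  have "coprime P' R'" using coprime_quot_of_fract[of h] PR' by simp
  then have "R' dvd R" using cross by (metis coprime_commute coprime_dvd_mult_right_iff dvd_triv_right)
  then obtain S where "R = R' * S" by blast
  then have "eval3 q0 Q1 Q2 R' \<noteq> 0" using R by auto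
  moreover have "eval3 q0 Q1 Q2 P' * eval3 q0 Q1 Q2 R = eval3 q0 Q1 Q2 P * eval3 q0 Q1 Q2 R'"
    using arg_cong[OF cross, of "eval3 q0 Q1 Q2"] by simp
  ultimately show "defined_at q0 Q1 Q2 h"
    and "value_at q0 Q1 Q2 h = eval3 q0 Q1 Q2 P / eval3 q0 Q1 Q2 R"
    using R PR' by (simp_all add: defined_at_def value_at_def frac_eq_eq)
qed

lemma defined_atE:
  assumes "defined_at q0 Q1 Q2 h"
  obtains P R where "h = to_fract P / to_fract R" "eval3 q0 Q1 Q2 R \<noteq> 0"
    "value_at q0 Q1 Q2 h = eval3 q0 Q1 Q2 P / eval3 q0 Q1 Q2 R"
proof
  show "h = to_fract (fst (quot_of_fract h)) / to_fract (snd (quot_of_fract h))"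
    by (simp flip: Fract_conv_to_fract)
qed (use assms in \<open>simp_all add: defined_at_def value_at_def\<close>)

context
  fixes q0 Q1 Q2 :: "'k::field_gcd"
begin

definition unit_at :: "'k rfun \<Rightarrow> bool" where
  "unit_at h \<longleftrightarrow> defined_at q0 Q1 Q2 h \<and> value_at q0 Q1 Q2 h \<noteq> 0"

lemma defined_at_to_fract: "defined_at q0 Q1 Q2 (to_fract P)"
  and value_at_to_fract: "value_at q0 Q1 Q2 (to_fract P) = eval3 q0 Q1 Q2 P"
  using defined_at_fraction[of "to_fract P" P 1] by simp_all

lemma defined_at_1: "defined_at q0 Q1 Q2 1" and value_at_1: "value_at q0 Q1 Q2 1 = 1"
  using defined_at_to_fract[of 1] value_at_to_fract[of 1] by simp_all

lemma
  assumes "defined_at q0 Q1 Q2 a" "defined_at q0 Q1 Q2 b"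
  shows defined_at_mult: "defined_at q0 Q1 Q2 (a * b)"
    and value_at_mult: "value_at q0 Q1 Q2 (a * b) = value_at q0 Q1 Q2 a * value_at q0 Q1 Q2 b"
proof -
  obtain P R P' R' where "a = to_fract P / to_fract R" "eval3 q0 Q1 Q2 R \<noteq> 0"
    "value_at q0 Q1 Q2 a = eval3 q0 Q1 Q2 P / eval3 q0 Q1 Q2 R"
    "b = to_fract P' / to_fract R'" "eval3 q0 Q1 Q2 R' \<noteq> 0"
    "value_at q0 Q1 Q2 b = eval3 q0 Q1 Q2 P' / eval3 q0 Q1 Q2 R'"
    using assms by (elim defined_atE)
  with defined_at_fraction[of "a * b" "P * P'" "R * R'"]
  show "defined_at q0 Q1 Q2 (a * b)"
    and "value_at q0 Q1 Q2 (a * b) = value_at q0 Q1 Q2 a * value_at q0 Q1 Q2 b"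
    by simp_all
qed

lemma
  assumes "defined_at q0 Q1 Q2 a" "defined_at q0 Q1 Q2 b"
  shows defined_at_add: "defined_at q0 Q1 Q2 (a + b)"
    and value_at_add: "value_at q0 Q1 Q2 (a + b) = value_at q0 Q1 Q2 a + value_at q0 Q1 Q2 b"
proof -
  obtain P R P' R' where "a = to_fract P / to_fract R" "eval3 q0 Q1 Q2 R \<noteq> 0"
    "value_at q0 Q1 Q2 a = eval3 q0 Q1 Q2 P / eval3 q0 Q1 Q2 R"
    "b = to_fract P' / to_fract R'" "eval3 q0 Q1 Q2 R' \<noteq> 0"
    "value_at q0 Q1 Q2 b = eval3 q0 Q1 Q2 P' / eval3 q0 Q1 Q2 R'"
    using assms by (elim defined_atE)
  moreover from this have "R \<noteq> 0" "R' \<noteq> 0" by auto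
  ultimately show "defined_at q0 Q1 Q2 (a + b)"
    and "value_at q0 Q1 Q2 (a + b) = value_at q0 Q1 Q2 a + value_at q0 Q1 Q2 b"
    using defined_at_fraction[of "a + b" "P * R' + P' * R" "R * R'"]
    by (simp_all add: add_frac_eq)
qed

lemma
  assumes "defined_at q0 Q1 Q2 a"
  shows defined_at_uminus: "defined_at q0 Q1 Q2 (- a)"
    and value_at_uminus: "value_at q0 Q1 Q2 (- a) = - value_at q0 Q1 Q2 a"
proof -
  obtain P R where "a = to_fract P / to_fract R" "eval3 q0 Q1 Q2 R \<noteq> 0"
    "value_at q0 Q1 Q2 a = eval3 q0 Q1 Q2 P / eval3 q0 Q1 Q2 R"
    using assms by (elim defined_atE)
  with defined_at_fraction[of "- a" "- P" R]
  show "defined_at q0 Q1 Q2 (- a)" and "value_at q0 Q1 Q2 (- a) = - value_at q0 Q1 Q2 a"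
    by simp_all
qed

lemma
  assumes "unit_at a"
  shows defined_at_inverse: "defined_at q0 Q1 Q2 (inverse a)"
    and value_at_inverse: "value_at q0 Q1 Q2 (inverse a) = inverse (value_at q0 Q1 Q2 a)"
proof -
  obtain P R where "a = to_fract P / to_fract R" "eval3 q0 Q1 Q2 R \<noteq> 0"
    "value_at q0 Q1 Q2 a = eval3 q0 Q1 Q2 P / eval3 q0 Q1 Q2 R"
    using assms unfolding unit_at_def by (elim conjE defined_atE)
  moreover from this have "eval3 q0 Q1 Q2 P \<noteq> 0" using assms by (auto simp: unit_at_def)
  ultimately show "defined_at q0 Q1 Q2 (inverse a)"
    and "value_at q0 Q1 Q2 (inverse a) = inverse (value_at q0 Q1 Q2 a)"
    using defined_at_fraction[of "inverse a" R P] by simp_all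
qed

lemma
  assumes "defined_at q0 Q1 Q2 a" "defined_at q0 Q1 Q2 b"
  shows defined_at_diff: "defined_at q0 Q1 Q2 (a - b)"
    and value_at_diff: "value_at q0 Q1 Q2 (a - b) = value_at q0 Q1 Q2 a - value_at q0 Q1 Q2 b"
  using defined_at_add[of a "- b"] value_at_add[of a "- b"]
    defined_at_uminus[of b] value_at_uminus[of b] assms by simp_all

lemma
  assumes "defined_at q0 Q1 Q2 a" "unit_at b"
  shows defined_at_divide: "defined_at q0 Q1 Q2 (a / b)"
    and value_at_divide: "value_at q0 Q1 Q2 (a / b) = value_at q0 Q1 Q2 a / value_at q0 Q1 Q2 b"
  using defined_at_mult[of a "inverse b"] value_at_mult[of a "inverse b"]
    defined_at_inverse[of b] value_at_inverse[of b] assms by (simp_all add: divide_inverse)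

lemma
  assumes "defined_at q0 Q1 Q2 a"
  shows defined_at_power: "defined_at q0 Q1 Q2 (a ^ m)"
    and value_at_power: "value_at q0 Q1 Q2 (a ^ m) = value_at q0 Q1 Q2 a ^ m"
  by (induction m) (simp_all add: assms defined_at_1 value_at_1 defined_at_mult value_at_mult)

lemma
  assumes "unit_at a"
  shows defined_at_power_int: "defined_at q0 Q1 Q2 (a powi m)"
    and value_at_power_int: "value_at q0 Q1 Q2 (a powi m) = value_at q0 Q1 Q2 a powi m"
  using assms defined_at_power[OF defined_at_inverse] value_at_power[OF defined_at_inverse]
    value_at_inverse[OF assms]
  by (simp_all add: power_int_def unit_at_def defined_at_power value_at_power del: power_inverse)

lemma
  assumes "\<And>i. i \<in> S \<Longrightarrow> defined_at q0 Q1 Q2 (f i)"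
  shows defined_at_prod: "defined_at q0 Q1 Q2 (prod f S)"
    and value_at_prod: "value_at q0 Q1 Q2 (prod f S) = (\<Prod>i\<in>S. value_at q0 Q1 Q2 (f i))"
  using assms
  by (induction S rule: infinite_finite_induct)
    (simp_all add: defined_at_1 value_at_1 defined_at_mult value_at_mult)

lemma unit_at_1: "unit_at 1"
  by (simp add: unit_at_def defined_at_1 value_at_1)

lemma unit_at_uminus: "unit_at a \<Longrightarrow> unit_at (- a)"
  by (simp add: unit_at_def defined_at_uminus value_at_uminus)

lemma unit_at_mult: "unit_at a \<Longrightarrow> unit_at b \<Longrightarrow> unit_at (a * b)"
  by (simp add: unit_at_def defined_at_mult value_at_mult)

lemma unit_at_divide: "unit_at a \<Longrightarrow> unit_at b \<Longrightarrow> unit_at (a / b)"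
  by (simp add: unit_at_def defined_at_divide value_at_divide)

lemma unit_at_prod: "(\<And>i. i \<in> S \<Longrightarrow> unit_at (f i)) \<Longrightarrow> unit_at (prod f S)"
  by (cases "finite S") (simp_all add: unit_at_def defined_at_prod value_at_prod defined_at_1 value_at_1)

lemma defined_at_var_q: "defined_at q0 Q1 Q2 var_q" and value_at_var_q: "value_at q0 Q1 Q2 var_q = q0"
  using defined_at_to_fract value_at_to_fract by (simp_all add: var_q_def eval3_def)

lemma unit_at_var_Q1: "Q1 \<noteq> 0 \<Longrightarrow> unit_at var_Q1"
  and value_at_var_Q1: "value_at q0 Q1 Q2 var_Q1 = Q1"
  using defined_at_to_fract value_at_to_fract by (simp_all add: unit_at_def var_Q1_def eval3_def)

lemma unit_at_var_Q2: "Q2 \<noteq> 0 \<Longrightarrow> unit_at var_Q2"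
  and value_at_var_Q2: "value_at q0 Q1 Q2 var_Q2 = Q2"
  using defined_at_to_fract value_at_to_fract by (simp_all add: unit_at_def var_Q2_def eval3_def)

end

section \<open>Quantum numbers at a root of unity\<close>

lemma power_int_diff_nonzero:
  fixes q0 :: "'k::field"
  assumes "q0 \<noteq> 0" "q0 ^ (2 * t) \<noteq> 1"
  shows "q0 powi int t - q0 powi (- int t) \<noteq> 0"
proof
  assume "q0 powi int t - q0 powi (- int t) = 0"
  then have "q0 ^ t * q0 ^ t = inverse (q0 ^ t) * q0 ^ t" by (simp add: power_int_minus)
  with assms show False by (simp flip: power_add mult_2)
qed

lemma generic_power_int_diff_nonzero:
  fixes q0 Q :: "'k::field"
  assumes "q0 \<noteq> 0" "Q \<noteq> 0" "\<forall>m::int. Q \<noteq> q0 powi m \<and> Q \<noteq> - (q0 powi m)"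
  shows "Q * q0 powi x - inverse Q * q0 powi (- x) \<noteq> 0"
proof
  assume "Q * q0 powi x - inverse Q * q0 powi (- x) = 0"
  then have "(Q * q0 powi x) * (Q * q0 powi x) = (inverse Q * Q) * (q0 powi (- x) * q0 powi x)"
    by (simp add: algebra_simps)
  also have "\<dots> = 1" using assms(1,2) by (simp add: power_int_minus)
  finally have "(Q * q0 powi x - 1) * (Q * q0 powi x + 1) = 0" by (simp add: algebra_simps)
  then have "Q * q0 powi x = 1 \<or> Q * q0 powi x = - 1" by (auto simp: eq_neg_iff_add_eq_0)
  then have "Q = q0 powi (- x) \<or> Q = - (q0 powi (- x))"
    using assms(1) by (auto simp: power_int_minus field_simps)
  with assms(3) show False by blast
qed

lemma var_q_power_eq_1_iff: "(var_q :: 'k::field_gcd rfun) ^ m = 1 \<longleftrightarrow> m = 0"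
proof
  assume "(var_q :: 'k rfun) ^ m = 1"
  moreover have "to_fract (p ^ m) = to_fract p ^ m" for p :: "'k rpoly"
    by (induction m) simp_all
  ultimately have "to_fract ([:[:[:0, 1:]:]:] ^ m :: 'k rpoly) = to_fract 1"
    by (simp add: var_q_def)
  then have "([:[:[:0, 1:]:]:] ^ m :: 'k rpoly) = 1" by (simp only: to_fract_eq_iff)
  then have "([:0, 1:] ^ m :: 'k poly) = 1" by (simp add: poly_const_pow one_pCons)
  then show "m = 0" using degree_power_eq[of "[:0, 1:] :: 'k poly" m] by simp
qed simp

text \<open>Needed to cancel [l] in h_3: evaluation cannot show this, as [l] vanishes at the point.\<close>
lemma qnum_nonzero:
  assumes "x \<noteq> 0"
  shows "(qnum x :: 'k::field_gcd rfun) \<noteq> 0"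
proof
  let ?q = "var_q :: 'k rfun"
  have "?q \<noteq> 0" by (simp add: var_q_def)
  have "?q - inverse ?q \<noteq> 0"
  proof
    assume "?q - inverse ?q = 0"
    then have "?q ^ 2 = 1" using \<open>?q \<noteq> 0\<close> by (simp add: power2_eq_square field_simps)
    then show False by (subst (asm) var_q_power_eq_1_iff) simp
  qed
  moreover assume "qnum x = (0 :: 'k rfun)"
  ultimately have eq: "?q powi x = ?q powi (- x)" by (simp add: qnum_def)
  have "?q powi (x + x) = ?q powi x * ?q powi x"
    using \<open>?q \<noteq> 0\<close> by (intro power_int_add disjI1)
  also have "\<dots> = ?q powi x * ?q powi (- x)" using eq by simp
  also have "\<dots> = 1" using \<open>?q \<noteq> 0\<close> by (simp add: power_int_minus)
  finally have "?q powi (x + x) = 1" .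
  then have "?q ^ nat \<bar>x + x\<bar> = 1"
    using \<open>?q \<noteq> 0\<close> by (cases "x \<ge> 0") (auto simp: power_int_def power_inverse)
  then show False using assms by (simp only: var_q_power_eq_1_iff)
qed

context
  fixes q0 Q1 Q2 :: "'k::field_gcd"
  assumes q0_nonzero: "q0 \<noteq> 0" and q0_square: "q0 ^ 2 \<noteq> 1"
begin

lemma unit_at_var_q: "unit_at q0 Q1 Q2 var_q"
  using q0_nonzero by (simp add: unit_at_def defined_at_var_q value_at_var_q)

lemma value_at_qdenom: "value_at q0 Q1 Q2 (var_q - inverse var_q) = q0 - inverse q0"
  using unit_at_var_q
  by (simp add: defined_at_inverse value_at_diff value_at_inverse defined_at_var_q value_at_var_q)

lemma unit_at_qdenom: "unit_at q0 Q1 Q2 (var_q - inverse var_q)"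
  using power_int_diff_nonzero[of q0 1] q0_nonzero q0_square unit_at_var_q
  by (simp add: unit_at_def defined_at_diff defined_at_inverse defined_at_var_q value_at_qdenom)

lemma
  shows defined_at_qnum: "defined_at q0 Q1 Q2 (qnum x)"
    and value_at_qnum:
      "value_at q0 Q1 Q2 (qnum x) = (q0 powi x - q0 powi (- x)) / (q0 - inverse q0)"
  using unit_at_var_q unit_at_qdenom unfolding qnum_def
  by (simp_all add: defined_at_divide value_at_divide defined_at_diff value_at_diff
      defined_at_power_int value_at_power_int defined_at_inverse value_at_inverse value_at_var_q
      value_at_qdenom)

lemma unit_at_qnum: "q0 ^ (2 * t) \<noteq> 1 \<Longrightarrow> unit_at q0 Q1 Q2 (qnum (int t))"
  using power_int_diff_nonzero[of q0 t] power_int_diff_nonzero[of q0 1] q0_nonzero q0_square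
  by (simp add: unit_at_def defined_at_qnum value_at_qnum)

lemma unit_at_qnumw:
  assumes "unit_at q0 Q1 Q2 Q"
    and "\<forall>m::int. value_at q0 Q1 Q2 Q \<noteq> q0 powi m \<and> value_at q0 Q1 Q2 Q \<noteq> - (q0 powi m)"
  shows "unit_at q0 Q1 Q2 (qnumw Q x)"
proof -
  have "defined_at q0 Q1 Q2 (qnumw Q x)"
    and "value_at q0 Q1 Q2 (qnumw Q x) = (value_at q0 Q1 Q2 Q * q0 powi x
           - inverse (value_at q0 Q1 Q2 Q) * q0 powi (- x)) / (q0 - inverse q0)"
    using assms(1) unit_at_var_q unit_at_qdenom unfolding qnumw_def
    by (simp_all add: unit_at_def defined_at_divide value_at_divide defined_at_diff
        value_at_diff defined_at_mult value_at_mult defined_at_power_int value_at_power_int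
        defined_at_inverse value_at_inverse value_at_var_q value_at_qdenom)
  with assms generic_power_int_diff_nonzero[of q0 "value_at q0 Q1 Q2 Q" x]
    power_int_diff_nonzero[of q0 1] q0_nonzero q0_square
  show ?thesis by (simp add: unit_at_def)
qed

end

section \<open>Arcs of a half-diagram\<close>

definition arc_qnum_arg :: "nat \<Rightarrow> blob \<Rightarrow> nat \<times> nat \<Rightarrow> int" where
  "arc_qnum_arg n d g = (let a = int (fst g); j = int (snd g) in
     (case d of Undec \<Rightarrow> (j - a - 1) div 2 + 1 | LBlob \<Rightarrow> j div 2 | RBlob \<Rightarrow> (int n - a + 1) div 2))"

definition arc_blob_factor :: "nat \<Rightarrow> blob \<Rightarrow> nat \<times> nat \<Rightarrow> 'k::field_gcd rfun" where
  "arc_blob_factor n d g = (case d of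
      Undec \<Rightarrow> 1
    | LBlob \<Rightarrow> qnumw var_Q1 ((1 - int (fst g)) div 2)
    | RBlob \<Rightarrow> qnumw var_Q2 ((int (snd g) - int n) div 2))"

lemma h3_arc_eq: "h3_arc n d g = qnum (arc_qnum_arg n d g) * arc_blob_factor n d g"
  by (cases d) (simp_all add: h3_arc_def arc_qnum_arg_def arc_blob_factor_def Let_def)

definition arc_span :: "nat \<Rightarrow> blob \<Rightarrow> nat \<times> nat \<Rightarrow> nat set" where
  "arc_span n d g = (case d of Undec \<Rightarrow> {fst g..snd g} | LBlob \<Rightarrow> {1..snd g} | RBlob \<Rightarrow> {fst g..n})"

lemma arc_qnum_arg_eq_card:
  assumes "1 \<le> fst g" "fst g < snd g" "snd g \<le> n"
  shows "arc_qnum_arg n d g = int (card (arc_span n d g) div 2)"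
proof -
  obtain i j where "g = (i, j)" by (cases g)
  with assms show ?thesis
    by (cases d) (simp_all add: arc_qnum_arg_def arc_span_def zdiv_int of_nat_diff)
qed

locale halfdiagram =
  fixes n l :: nat and A :: "(nat \<times> nat) set" and dec :: "nat \<times> nat \<Rightarrow> blob"
  assumes is_halfdiag: "is_halfdiag n l (A, dec)"
begin

lemma card_arcs: "card A = l"
  and arc_bounds: "(i, j) \<in> A \<Longrightarrow> 1 \<le> i \<and> i < j \<and> j \<le> n"
  and arcs_disjoint: "g \<in> A \<Longrightarrow> g' \<in> A \<Longrightarrow> g \<noteq> g' \<Longrightarrow> {fst g, snd g} \<inter> {fst g', snd g'} = {}"
  and no_free_vertex_under_arc: "(i, j) \<in> A \<Longrightarrow> v \<in> free_vertices n A \<Longrightarrow> \<not> (i < v \<and> v < j)"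
  and left_blob_exposed: "g \<in> A \<Longrightarrow> dec g = LBlob \<Longrightarrow> left_exposed n A g"
  and right_blob_exposed: "g \<in> A \<Longrightarrow> dec g = RBlob \<Longrightarrow> right_exposed n A g"
  using is_halfdiag by (auto simp: is_halfdiag_def)

lemma finite_arcs: "finite A"
  by (rule finite_subset[of _ "{1..n} \<times> {1..n}"]) (auto dest: arc_bounds)

lemma card_endpoints_le: "card (endpoints A) \<le> 2 * l"
proof -
  have "card (endpoints A) \<le> card (fst ` A) + card (snd ` A)"
    unfolding endpoints_def by (rule card_Un_le)
  also have "\<dots> \<le> card A + card A" by (intro add_mono card_image_le finite_arcs)
  finally show ?thesis using card_arcs by simp
qed

lemma arc_span_subset_endpoints:
  assumes "g \<in> A"
  shows "arc_span n (dec g) g \<subseteq> endpoints A"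
proof
  fix v assume v: "v \<in> arc_span n (dec g) g"
  obtain i j where g: "g = (i, j)" by (cases g)
  have ij: "1 \<le> i" "i < j" "j \<le> n" using arc_bounds assms g by auto
  have "v \<notin> free_vertices n A"
  proof
    assume free: "v \<in> free_vertices n A"
    then have "v \<noteq> i" "v \<noteq> j" using assms g by (force simp: free_vertices_def endpoints_def)+
    moreover have "\<not> (i < v \<and> v < j)" using no_free_vertex_under_arc assms g free by blast
    moreover have "dec g = LBlob \<Longrightarrow> \<not> v < i" "dec g = RBlob \<Longrightarrow> \<not> j < v"
      using left_blob_exposed right_blob_exposed assms g free
      by (auto simp: left_exposed_def right_exposed_def)
    ultimately show False using v g by (cases "dec g") (auto simp: arc_span_def)
  qed
  moreover have "v \<in> {1..n}" using v g ij by (cases "dec g") (auto simp: arc_span_def)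
  ultimately show "v \<in> endpoints A" by (simp add: free_vertices_def)
qed

lemma arc_qnum_arg_bounds:
  assumes "g \<in> A"
  shows "1 \<le> arc_qnum_arg n (dec g) g" "arc_qnum_arg n (dec g) g \<le> int l"
proof -
  obtain i j where g: "g = (i, j)" by (cases g)
  have ij: "1 \<le> i" "i < j" "j \<le> n" using arc_bounds assms g by auto
  have "{i, j} \<subseteq> arc_span n (dec g) g" using ij g by (cases "dec g") (auto simp: arc_span_def)
  then have "2 \<le> card (arc_span n (dec g) g)"
    using ij card_mono[of "arc_span n (dec g) g" "{i, j}"]
    by (cases "dec g") (auto simp: arc_span_def)
  moreover have "card (arc_span n (dec g) g) \<le> 2 * l"
    using card_mono[OF _ arc_span_subset_endpoints[OF assms]] finite_arcs card_endpoints_le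
    by (simp add: endpoints_def)
  ultimately show "1 \<le> arc_qnum_arg n (dec g) g" "arc_qnum_arg n (dec g) g \<le> int l"
    using arc_qnum_arg_eq_card[of g n "dec g"] ij g by simp_all
qed

lemma arc_span_eq_endpoints:
  assumes "g \<in> A" "arc_qnum_arg n (dec g) g = int l"
  shows "arc_span n (dec g) g = endpoints A"
proof (rule card_seteq)
  show "finite (endpoints A)" using finite_arcs by (simp add: endpoints_def)
  show "arc_span n (dec g) g \<subseteq> endpoints A" using arc_span_subset_endpoints[OF assms(1)] .
  obtain i j where "g = (i, j)" by (cases g)
  with assms arc_bounds have "card (arc_span n (dec g) g) div 2 = l"
    using arc_qnum_arg_eq_card[of g n "dec g"] by auto
  then show "card (endpoints A) \<le> card (arc_span n (dec g) g)" using card_endpoints_le by linarith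
qed

text \<open>Two such arcs would have the same span; spans are intervals, so they would share an
  endpoint or the span would be all of 1..n, which has more than 2l elements.\<close>
lemma full_arc_unique:
  assumes "2 * l < n" and g: "g \<in> A" "arc_qnum_arg n (dec g) g = int l"
    and g': "g' \<in> A" "arc_qnum_arg n (dec g') g' = int l"
  shows "g = g'"
proof (rule ccontr)
  assume "g \<noteq> g'"
  obtain i j i' j' where ij: "g = (i, j)" and ij': "g' = (i', j')" by (cases g, cases g')
  have "{i, j} \<inter> {i', j'} = {}" using arcs_disjoint[OF g(1) g'(1) \<open>g \<noteq> g'\<close>] ij ij' by simp
  moreover have "1 \<le> i" "i < j" "j \<le> n" "1 \<le> i'" "i' < j'" "j' \<le> n"
    using arc_bounds g(1) g'(1) ij ij' by auto
  moreover have span: "arc_span n (dec g) g = arc_span n (dec g') g'"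
    using arc_span_eq_endpoints g g' by simp
  moreover have "arc_span n (dec g) g \<noteq> {1..n}"
    using arc_span_eq_endpoints[OF g] card_endpoints_le assms(1) by auto
  ultimately show False
    using ij ij' by (cases "dec g"; cases "dec g'") (auto simp: arc_span_def Icc_eq_Icc)
qed

end

section \<open>The hook product\<close>

locale admissible_point =
  fixes q0 Q1 Q2 :: "'k::field_gcd" and l :: nat
  assumes l_ge_2: "2 \<le> l"
    and q0_nonzero: "q0 \<noteq> 0"
    and q0_power_ne_1: "\<And>t. 0 < t \<Longrightarrow> t < l \<Longrightarrow> q0 ^ (2 * t) \<noteq> 1"
    and Q1_nonzero: "Q1 \<noteq> 0" and Q1_generic: "\<forall>m::int. Q1 \<noteq> q0 powi m \<and> Q1 \<noteq> - (q0 powi m)"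
    and Q2_nonzero: "Q2 \<noteq> 0" and Q2_generic: "\<forall>m::int. Q2 \<noteq> q0 powi m \<and> Q2 \<noteq> - (q0 powi m)"
begin

lemma q0_square: "q0 ^ 2 \<noteq> 1"
  using q0_power_ne_1[of 1] l_ge_2 by simp

lemma defined_at_qfact: "defined_at q0 Q1 Q2 (qfact m)"
  unfolding qfact_def by (intro defined_at_prod defined_at_qnum q0_nonzero q0_square)

lemma unit_at_qnum_below: "1 \<le> x \<Longrightarrow> x < int l \<Longrightarrow> unit_at q0 Q1 Q2 (qnum x)"
  using unit_at_qnum[OF q0_nonzero q0_square, of "nat x"] q0_power_ne_1[of "nat x"] by simp

lemma unit_at_qfact: "m < l \<Longrightarrow> unit_at q0 Q1 Q2 (qfact m)"
  unfolding qfact_def by (intro unit_at_prod unit_at_qnum_below) auto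

lemma unit_at_qnumw_Q1: "unit_at q0 Q1 Q2 (qnumw var_Q1 x)"
  using unit_at_qnumw[OF q0_nonzero q0_square unit_at_var_Q1[OF Q1_nonzero]] Q1_generic
  by (simp add: value_at_var_Q1)

lemma unit_at_qnumw_Q2: "unit_at q0 Q1 Q2 (qnumw var_Q2 x)"
  using unit_at_qnumw[OF q0_nonzero q0_square unit_at_var_Q2[OF Q2_nonzero]] Q2_generic
  by (simp add: value_at_var_Q2)

lemma unit_at_qfallfact: "unit_at q0 Q1 Q2 (qfallfact var_Q1 m * qfallfact var_Q2 m)"
  unfolding qfallfact_def by (intro unit_at_mult unit_at_prod unit_at_qnumw_Q1 unit_at_qnumw_Q2)

lemma unit_at_arc_blob_factor: "unit_at q0 Q1 Q2 (arc_blob_factor n d g)"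
  by (cases d) (simp_all add: arc_blob_factor_def unit_at_1 unit_at_qnumw_Q1 unit_at_qnumw_Q2)

lemma unit_at_h3_props: "unit_at q0 Q1 Q2 (\<Prod>a\<in>V. h3_prop l a)"
  by (intro unit_at_prod) (simp add: h3_prop_def unit_at_1 unit_at_uminus)

end

locale specialised_halfdiagram =
  admissible_point q0 Q1 Q2 l + halfdiagram n l A dec
  for q0 Q1 Q2 :: "'k::field_gcd" and l n A dec +
  assumes n_gt: "2 * l < n"
begin

lemma unit_at_h3_arc:
  assumes "g \<in> A" "arc_qnum_arg n (dec g) g \<noteq> int l"
  shows "unit_at q0 Q1 Q2 (h3_arc n (dec g) g)"
  using arc_qnum_arg_bounds[OF assms(1)] assms(2) unfolding h3_arc_eq
  by (intro unit_at_mult unit_at_qnum_below unit_at_arc_blob_factor) auto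

lemma h3_eq:
  "h3 n l (A, dec) = (qfact l * (qfallfact var_Q1 l * qfallfact var_Q2 l)) /
     ((\<Prod>g\<in>A. h3_arc n (dec g) g) * (\<Prod>a\<in>free_vertices n A. h3_prop l a))"
  by (simp add: h3_def mult.assoc)

text \<open>The factor [l] of [l]!, the only one vanishing at a primitive 2l-th root of unity,
  cancels against the hook of the full arc.\<close>
lemma unit_at_h3_if_full_arc:
  assumes "g0 \<in> A" "arc_qnum_arg n (dec g0) g0 = int l"
  shows "unit_at q0 Q1 Q2 (h3 n l (A, dec))"
proof -
  obtain m where m: "l = Suc m" using l_ge_2 by (cases l) auto
  have "qnum (int l) \<noteq> (0 :: 'k rfun)" using l_ge_2 by (intro qnum_nonzero) simp
  have others: "unit_at q0 Q1 Q2 (\<Prod>g\<in>A - {g0}. h3_arc n (dec g) g)"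
    using full_arc_unique[OF n_gt _ _ assms] by (intro unit_at_prod unit_at_h3_arc) auto
  have qfact_l: "qfact l = qfact m * qnum (int l)" by (simp add: qfact_def m prod.cl_ivl_Suc)
  have "(h3 n l (A, dec) :: 'k rfun) =
     (qnum (int l) * (qfact m * (qfallfact var_Q1 l * qfallfact var_Q2 l))) /
     (qnum (int l) * (arc_blob_factor n (dec g0) g0 * (\<Prod>g\<in>A - {g0}. h3_arc n (dec g) g)
       * (\<Prod>a\<in>free_vertices n A. h3_prop l a)))"
    unfolding h3_eq prod.remove[OF finite_arcs assms(1)] h3_arc_eq[of n "dec g0"] assms(2) qfact_l
    by (simp only: ac_simps)
  also have "\<dots> = qfact m * (qfallfact var_Q1 l * qfallfact var_Q2 l) /
     (arc_blob_factor n (dec g0) g0 * (\<Prod>g\<in>A - {g0}. h3_arc n (dec g) g)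
       * (\<Prod>a\<in>free_vertices n A. h3_prop l a))"
    using \<open>qnum (int l) \<noteq> 0\<close> by simp
  finally have h3_cancelled: "(h3 n l (A, dec) :: 'k rfun) = \<dots>" .
  have "unit_at q0 Q1 Q2 (qfact m * (qfallfact var_Q1 l * qfallfact var_Q2 l))"
    using m by (intro unit_at_mult[OF unit_at_qfact unit_at_qfallfact]) simp
  moreover have "unit_at q0 Q1 Q2 (arc_blob_factor n (dec g0) g0 *
      (\<Prod>g\<in>A - {g0}. h3_arc n (dec g) g) * (\<Prod>a\<in>free_vertices n A. h3_prop l a))"
    by (intro unit_at_mult unit_at_arc_blob_factor others unit_at_h3_props)
  ultimately show ?thesis unfolding h3_cancelled by (rule unit_at_divide)
qed

lemma defined_at_h3: "defined_at q0 Q1 Q2 (h3 n l (A, dec))"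
proof (cases "\<exists>g\<in>A. arc_qnum_arg n (dec g) g = int l")
  case True
  then show ?thesis using unit_at_h3_if_full_arc by (auto simp: unit_at_def)
next
  case False
  then have "unit_at q0 Q1 Q2 ((\<Prod>g\<in>A. h3_arc n (dec g) g) * (\<Prod>a\<in>free_vertices n A. h3_prop l a))"
    by (intro unit_at_mult unit_at_prod unit_at_h3_arc unit_at_h3_props) auto
  moreover have "defined_at q0 Q1 Q2 (qfallfact var_Q1 l * qfallfact var_Q2 l)"
    using unit_at_qfallfact by (simp add: unit_at_def)
  ultimately show ?thesis
    unfolding h3_eq by (intro defined_at_divide defined_at_mult[OF defined_at_qfact])
qed

end

definition adjacent_arcs :: "nat \<Rightarrow> (nat \<times> nat) set" where
  "adjacent_arcs l = (\<lambda>i. (2 * i - 1, 2 * i)) ` {1..l}"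

definition last_arc_left_blob :: "nat \<Rightarrow> nat \<times> nat \<Rightarrow> blob" where
  "last_arc_left_blob l g = (if g = (2 * l - 1, 2 * l) then LBlob else Undec)"

lemma adjacent_arc_shape: "(i, j) \<in> adjacent_arcs l \<Longrightarrow> odd i \<and> j = i + 1 \<and> j \<le> 2 * l"
  by (auto simp: adjacent_arcs_def)

lemma last_adjacent_arc: "1 \<le> l \<Longrightarrow> (2 * l - 1, 2 * l) \<in> adjacent_arcs l"
  by (auto simp: adjacent_arcs_def)

lemma endpoints_adjacent_arcs: "endpoints (adjacent_arcs l) = {1..2 * l}"
proof
  show "endpoints (adjacent_arcs l) \<subseteq> {1..2 * l}" by (auto simp: endpoints_def adjacent_arcs_def)
  show "{1..2 * l} \<subseteq> endpoints (adjacent_arcs l)"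
  proof
    fix v assume v: "v \<in> {1..2 * l}"
    then have "(2 * ((v + 1) div 2) - 1, 2 * ((v + 1) div 2)) \<in> adjacent_arcs l"
      unfolding adjacent_arcs_def by (intro image_eqI[of _ _ "(v + 1) div 2"]) auto
    moreover have "v = 2 * ((v + 1) div 2) - 1 \<or> v = 2 * ((v + 1) div 2)" by presburger
    ultimately show "v \<in> endpoints (adjacent_arcs l)" unfolding endpoints_def by force
  qed
qed

lemma adjacent_arcs_halfdiag:
  assumes "1 \<le> l" "2 * l \<le> n"
  shows "(adjacent_arcs l, last_arc_left_blob l) \<in> halfdiags n l"
proof -
  have free: "free_vertices n (adjacent_arcs l) = {2 * l + 1..n}"
    unfolding free_vertices_def endpoints_adjacent_arcs by auto
  have "card (adjacent_arcs l) = l"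
    unfolding adjacent_arcs_def by (subst card_image) (auto simp: inj_on_def)
  moreover have "\<forall>g\<in>adjacent_arcs l. \<forall>g'\<in>adjacent_arcs l. g \<noteq> g' \<longrightarrow>
      {fst g, snd g} \<inter> {fst g', snd g'} = {}"
  proof (intro ballI impI)
    fix g g' assume "g \<in> adjacent_arcs l" "g' \<in> adjacent_arcs l" "g \<noteq> g'"
    moreover obtain i j i' j' where "g = (i, j)" "g' = (i', j')" by (cases g, cases g')
    moreover note adjacent_arc_shape[of i j l] adjacent_arc_shape[of i' j' l]
    ultimately have "odd i" "odd i'" "g = (i, i + 1)" "g' = (i', i' + 1)" "i \<noteq> i'" by auto
    then show "{fst g, snd g} \<inter> {fst g', snd g'} = {}" by auto
  qed
  moreover have "left_exposed n (adjacent_arcs l) (2 * l - 1, 2 * l)"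
    unfolding left_exposed_def free by (auto simp: adjacent_arcs_def)
  moreover have "\<forall>(i, j)\<in>adjacent_arcs l. 1 \<le> i \<and> i < j \<and> j \<le> n"
    using adjacent_arc_shape[of _ _ l] assms(2) by (fastforce elim: oddE)
  moreover have "\<forall>(i, j)\<in>adjacent_arcs l. \<forall>v. \<not> (i < v \<and> v < j)"
    using adjacent_arc_shape[of _ _ l] by fastforce
  ultimately show ?thesis
    using last_adjacent_arc[OF assms(1)]
    unfolding halfdiags_def is_halfdiag_def Let_def fst_conv snd_conv
    by (simp add: last_arc_left_blob_def) blast
qed

theorem lemma4p3p1:
  fixes n l :: nat and q0 Q10 Q20 :: "'k::field_gcd"
  assumes "2 * l \<ge> 6" and "n > 2 * l"
    and "q0 ^ (2 * l) = 1" and "\<forall>m. 0 < m \<and> m < 2 * l \<longrightarrow> q0 ^ m \<noteq> 1"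
    and "Q10 \<noteq> 0" and "\<forall>m::int. Q10 \<noteq> q0 powi m \<and> Q10 \<noteq> - (q0 powi m)"
    and "Q20 \<noteq> 0" and "\<forall>m::int. Q20 \<noteq> q0 powi m \<and> Q20 \<noteq> - (q0 powi m)"
  shows "(\<forall>D\<in>halfdiags n l. defined_at q0 Q10 Q20 (h3 n l D :: 'k rfun)) \<and>
         (\<exists>D\<in>halfdiags n l. value_at q0 Q10 Q20 (h3 n l D :: 'k rfun) \<noteq> 0)"
proof -
  have "admissible_point q0 Q10 Q20 l"
  proof
    show "2 \<le> l" "q0 \<noteq> 0" using assms(1,3) by (auto simp: power_0_left)
  qed (use assms(4-8) in auto)
  then have diagram: "specialised_halfdiagram q0 Q10 Q20 l n A dec"
    if "(A, dec) \<in> halfdiags n l" for A dec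
    using that assms(2) by (simp add: specialised_halfdiagram_def halfdiagram_def
        specialised_halfdiagram_axioms_def halfdiags_def)
  have "defined_at q0 Q10 Q20 (h3 n l D :: 'k rfun)" if "D \<in> halfdiags n l" for D
    using specialised_halfdiagram.defined_at_h3[OF diagram] that by (cases D) simp
  moreover have witness: "(adjacent_arcs l, last_arc_left_blob l) \<in> halfdiags n l"
    using assms(1,2) by (intro adjacent_arcs_halfdiag) auto
  moreover have "unit_at q0 Q10 Q20 (h3 n l (adjacent_arcs l, last_arc_left_blob l) :: 'k rfun)"
    using specialised_halfdiagram.unit_at_h3_if_full_arc[OF diagram[OF witness]] assms(1)
      last_adjacent_arc[of l] by (simp add: last_arc_left_blob_def arc_qnum_arg_def)
  ultimately show ?thesis by (auto simp: unit_at_def)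
qed

end
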